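(* Let $X$ be a finite connected vertex transitive graph and $D=\operatorname{diam}(X)$. Suppose that for some $\epsilon,c>0$ there exists a 3-caret of branch length $R=\epsilon D^c$ in $X$. Then $|X|>\epsilon' D^{1+c(\log_3 4-1)}$, where $\epsilon'=\tfrac12\epsilon^{\log_3 4-1}$.
   Context: A 3-caret of branch length $R$ in a graph (with graph metric $d$) is a triple $\gamma_1,\gamma_2,\gamma_3$ of geodesics from a vertex $v_0$ to vertices $v_1,v_2,v_3$ respectively, with $d(v_0,v_i)=R$ for $i=1,2,3$, such that for all $k_1,k_2,k_3$ and $i\neq j$, $d(\gamma_i(k_i),\gamma_j(k_j))\ge\max\{k_i,k_j\}$ (here $\gamma_i(k)$ is the vertex at distance $k$ from $v_0$ along $\gamma_i$). *)

theory Defs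
  imports "HOL-Analysis.Analysis"
begin

definition fin_graph :: "'a set \<Rightarrow> ('a \<Rightarrow> 'a \<Rightarrow> bool) \<Rightarrow> bool" where
  "fin_graph V E \<longleftrightarrow> finite V \<and> V \<noteq> {} \<and>
     (\<forall>u v. E u v \<longrightarrow> u \<in> V \<and> v \<in> V) \<and>
     (\<forall>u v. E u v \<longrightarrow> E v u) \<and> (\<forall>u. \<not> E u u)"

definition walk :: "('a \<Rightarrow> 'a \<Rightarrow> bool) \<Rightarrow> (nat \<Rightarrow> 'a) \<Rightarrow> nat \<Rightarrow> bool" where
  "walk E p n \<longleftrightarrow> (\<forall>i<n. E (p i) (p (Suc i)))"

definition graph_connected :: "'a set \<Rightarrow> ('a \<Rightarrow> 'a \<Rightarrow> bool) \<Rightarrow> bool" where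
  "graph_connected V E \<longleftrightarrow>
     (\<forall>u\<in>V. \<forall>v\<in>V. \<exists>n p. p 0 = u \<and> p n = v \<and> walk E p n)"

definition gdist :: "('a \<Rightarrow> 'a \<Rightarrow> bool) \<Rightarrow> 'a \<Rightarrow> 'a \<Rightarrow> nat" where
  "gdist E u v = (LEAST n. \<exists>p. p 0 = u \<and> p n = v \<and> walk E p n)"

definition diam :: "'a set \<Rightarrow> ('a \<Rightarrow> 'a \<Rightarrow> bool) \<Rightarrow> nat" where
  "diam V E = Max {gdist E u v | u v. u \<in> V \<and> v \<in> V}"

definition graph_automorphism :: "'a set \<Rightarrow> ('a \<Rightarrow> 'a \<Rightarrow> bool) \<Rightarrow> ('a \<Rightarrow> 'a) \<Rightarrow> bool" where
  "graph_automorphism V E f \<longleftrightarrow> bij_betw f V V \<and>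
     (\<forall>u\<in>V. \<forall>v\<in>V. E u v \<longleftrightarrow> E (f u) (f v))"

definition vertex_transitive :: "'a set \<Rightarrow> ('a \<Rightarrow> 'a \<Rightarrow> bool) \<Rightarrow> bool" where
  "vertex_transitive V E \<longleftrightarrow>
     (\<forall>u\<in>V. \<forall>v\<in>V. \<exists>f. graph_automorphism V E f \<and> f u = v)"

definition geodesic :: "('a \<Rightarrow> 'a \<Rightarrow> bool) \<Rightarrow> (nat \<Rightarrow> 'a) \<Rightarrow> 'a \<Rightarrow> 'a \<Rightarrow> bool" where
  "geodesic E p u v \<longleftrightarrow> p 0 = u \<and> p (gdist E u v) = v \<and> walk E p (gdist E u v)"

definition caret3 :: "'a set \<Rightarrow> ('a \<Rightarrow> 'a \<Rightarrow> bool) \<Rightarrow> nat \<Rightarrow> bool" where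
  "caret3 V E R \<longleftrightarrow> (\<exists>v0 w g. v0 \<in> V \<and>
     (\<forall>i::nat<3. w i \<in> V \<and> gdist E v0 (w i) = R \<and> geodesic E (g i) v0 (w i)) \<and>
     (\<forall>i::nat<3. \<forall>j::nat<3. i \<noteq> j \<longrightarrow> (\<forall>ki\<le>R. \<forall>kj\<le>R.
         gdist E (g i ki) (g j kj) \<ge> max ki kj)))"

end

theory Submission
  imports Defs
begin

text \<open>Let v0 be the root of the caret. If 2s + 1 \<le> R, the root and the three branch vertices at
  distance 2s + 1 from it are pairwise more than 2s apart, so the s-balls around them are disjoint;
  they all lie in the (3s + 1)-ball around v0, and by vertex transitivity all balls of a given
  radius have the same size. Hence |B(3s + 1)| \<ge> 4 |B(s)|, and iterating, the ball of radius
  (3^m - 1)/2 has at least 4^m vertices whenever 3^m \<le> R. A diametral geodesic carries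
  D div 3^m + 1 vertices that are pairwise at least 3^m apart, whose balls of that radius are again
  disjoint; so |X| \<ge> (D/3^m) 4^m. Choosing 3^m \<le> R < 3^(m+1) gives
  |X| > D R^(log 3 4 - 1) / 2, which is the claim since R = \<epsilon> D^c.\<close>

section \<open>Walks and the graph metric\<close>

lemma walk_append:
  assumes "walk E p n" "walk E q m" "p n = q 0"
  shows "walk E (\<lambda>i. if i \<le> n then p i else q (i - n)) (n + m)"
  unfolding walk_def
proof (intro allI impI)
  fix i assume i: "i < n + m"
  show "E (if i \<le> n then p i else q (i - n)) (if Suc i \<le> n then p (Suc i) else q (Suc i - n))"
  proof (cases "i < n")
    case True then show ?thesis using assms(1) unfolding walk_def by auto
  next
    case False
    then have "i - n < m" "Suc i - n = Suc (i - n)" using i by auto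
    then have "E (q (i - n)) (q (Suc i - n))" using assms(2) unfolding walk_def by auto
    moreover have "(if i \<le> n then p i else q (i - n)) = q (i - n)"
      using False assms(3) by (cases "i = n") auto
    ultimately show ?thesis using False by auto
  qed
qed

lemma walk_rev:
  assumes "\<And>u v. E u v \<Longrightarrow> E v u" "walk E p n"
  shows "walk E (\<lambda>i. p (n - i)) n"
  unfolding walk_def
proof (intro allI impI)
  fix i assume "i < n"
  then have "E (p (n - Suc i)) (p (Suc (n - Suc i)))" using assms(2) unfolding walk_def by auto
  moreover have "Suc (n - Suc i) = n - i" using \<open>i < n\<close> by auto
  ultimately show "E (p (n - i)) (p (n - Suc i))" using assms(1) by metis
qed

lemma gdist_le_walk:
  assumes "walk E p n" "p 0 = u" "p n = v"
  shows "gdist E u v \<le> n"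
  unfolding gdist_def using assms by (intro Least_le) blast

lemma gdist_self [simp]: "gdist E u u = 0"
  using gdist_le_walk[of E "\<lambda>_. u" 0] by (simp add: walk_def)

lemma gdist_walk_segment_le:
  assumes "walk E p n" "i \<le> j" "j \<le> n"
  shows "gdist E (p i) (p j) \<le> j - i"
proof -
  have "walk E (\<lambda>t. p (i + t)) (j - i)" using assms unfolding walk_def by auto
  then show ?thesis by (rule gdist_le_walk) (use assms in auto)
qed

locale connected_graph =
  fixes V :: "'a set" and E :: "'a \<Rightarrow> 'a \<Rightarrow> bool"
  assumes fin_graph: "fin_graph V E" and connected: "graph_connected V E"
begin

lemma finite_V: "finite V"
  using fin_graph unfolding fin_graph_def by blast

lemma edge_sym: "E u v \<Longrightarrow> E v u"
  using fin_graph unfolding fin_graph_def by blast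

lemma walk_in_V:
  assumes "walk E p n" "p 0 \<in> V" "i \<le> n"
  shows "p i \<in> V"
  using assms(3)
proof (induction i)
  case 0 then show ?case using assms(2) by simp
next
  case (Suc i)
  then have "E (p i) (p (Suc i))" using assms(1) unfolding walk_def by auto
  then show ?case using fin_graph unfolding fin_graph_def by blast
qed

lemma shortest_walk:
  assumes "u \<in> V" "v \<in> V"
  obtains p where "p 0 = u" "p (gdist E u v) = v" "walk E p (gdist E u v)"
proof -
  have "\<exists>n p. p 0 = u \<and> p n = v \<and> walk E p n"
    using assms connected unfolding graph_connected_def by blast
  then have "\<exists>p. p 0 = u \<and> p (gdist E u v) = v \<and> walk E p (gdist E u v)"
    unfolding gdist_def by (rule LeastI_ex)
  then show ?thesis using that by blast
qed

lemma gdist_triangle: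
  assumes "u \<in> V" "v \<in> V" "w \<in> V"
  shows "gdist E u w \<le> gdist E u v + gdist E v w"
proof -
  obtain p where p: "p 0 = u" "p (gdist E u v) = v" "walk E p (gdist E u v)"
    using shortest_walk[OF assms(1,2)] .
  obtain q where q: "q 0 = v" "q (gdist E v w) = w" "walk E q (gdist E v w)"
    using shortest_walk[OF assms(2,3)] .
  have "walk E (\<lambda>i. if i \<le> gdist E u v then p i else q (i - gdist E u v))
      (gdist E u v + gdist E v w)"
    using walk_append[OF p(3) q(3)] p q by simp
  then show ?thesis by (rule gdist_le_walk) (use p q in \<open>auto simp: le_Suc_eq\<close>)
qed

lemma gdist_sym:
  assumes "u \<in> V" "v \<in> V"
  shows "gdist E v u = gdist E u v"
proof -
  have le: "gdist E y x \<le> gdist E x y" if xy: "x \<in> V" "y \<in> V" for x y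
  proof -
    obtain p where p: "p 0 = x" "p (gdist E x y) = y" "walk E p (gdist E x y)"
      using shortest_walk[OF xy] .
    have "walk E (\<lambda>i. p (gdist E x y - i)) (gdist E x y)"
      using walk_rev[OF _ p(3)] edge_sym by blast
    then show ?thesis by (rule gdist_le_walk) (use p in auto)
  qed
  show ?thesis using le[OF assms] le[OF assms(2,1)] by simp
qed

lemma gdist_geodesic_points:
  assumes "walk E p n" "p 0 \<in> V" "gdist E (p 0) (p n) = n" "i \<le> n" "j \<le> n"
  shows "gdist E (p i) (p j) = max i j - min i j"
proof -
  have V: "\<And>k. k \<le> n \<Longrightarrow> p k \<in> V" using walk_in_V assms(1,2) by blast
  have segment: "gdist E (p a) (p b) = b - a" if "a \<le> b" "b \<le> n" for a b
  proof -
    have "n \<le> gdist E (p 0) (p a) + gdist E (p a) (p n)"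
      using gdist_triangle[OF V V V, of 0 a n] assms(3) that by simp
    also have "gdist E (p a) (p n) \<le> gdist E (p a) (p b) + gdist E (p b) (p n)"
      using gdist_triangle[OF V V V, of a b n] that by simp
    finally show ?thesis
      using gdist_walk_segment_le[OF assms(1), of 0 a] gdist_walk_segment_le[OF assms(1), of b n]
        gdist_walk_segment_le[OF assms(1), of a b] that by linarith
  qed
  show ?thesis
  proof (cases "i \<le> j")
    case True then show ?thesis using segment[of i j] assms(5) by simp
  next
    case False then show ?thesis using segment[of j i] gdist_sym[OF V V, of j i] assms(4) by simp
  qed
qed

lemma diam_attained:
  obtains u v where "u \<in> V" "v \<in> V" "gdist E u v = diam V E"
proof -
  have eq: "{gdist E u v | u v. u \<in> V \<and> v \<in> V} = (\<lambda>(u,v). gdist E u v) ` (V \<times> V)" by auto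
  have "V \<times> V \<noteq> {}" using fin_graph unfolding fin_graph_def by auto
  then have "diam V E \<in> {gdist E u v | u v. u \<in> V \<and> v \<in> V}"
    unfolding diam_def eq using finite_V by (intro Max_in) auto
  then show ?thesis using that by auto
qed

lemma gdist_automorphism_le:
  assumes "graph_automorphism V E f" "u \<in> V" "v \<in> V"
  shows "gdist E (f u) (f v) \<le> gdist E u v"
proof -
  obtain p where p: "p 0 = u" "p (gdist E u v) = v" "walk E p (gdist E u v)"
    using shortest_walk[OF assms(2,3)] .
  have "walk E (f \<circ> p) (gdist E u v)"
    unfolding walk_def
  proof (intro allI impI)
    fix i assume i: "i < gdist E u v"
    have "p i \<in> V" "p (Suc i) \<in> V" using walk_in_V[OF p(3)] p(1) assms(2) i by auto
    moreover have "E (p i) (p (Suc i))" using p(3) i unfolding walk_def by auto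
    ultimately show "E ((f \<circ> p) i) ((f \<circ> p) (Suc i))"
      using assms(1) unfolding graph_automorphism_def by auto
  qed
  then show ?thesis by (rule gdist_le_walk) (use p in auto)
qed

end

section \<open>Balls in vertex transitive graphs\<close>

definition gball :: "'a set \<Rightarrow> ('a \<Rightarrow> 'a \<Rightarrow> bool) \<Rightarrow> 'a \<Rightarrow> nat \<Rightarrow> 'a set" where
  "gball V E x s = {y \<in> V. gdist E x y \<le> s}"

locale transitive_graph = connected_graph +
  assumes transitive: "vertex_transitive V E"
begin

lemma finite_gball: "finite (gball V E x s)"
  using finite_V unfolding gball_def by auto

lemma center_in_gball: "x \<in> V \<Longrightarrow> x \<in> gball V E x s"
  unfolding gball_def by simp

lemma card_gball_le:
  assumes "x \<in> V" "y \<in> V"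
  shows "card (gball V E x s) \<le> card (gball V E y s)"
proof -
  obtain f where f: "graph_automorphism V E f" "f x = y"
    using assms transitive unfolding vertex_transitive_def by blast
  have "f ` gball V E x s \<subseteq> gball V E y s"
    using f gdist_automorphism_le[OF f(1) assms(1)] bij_betwE
    unfolding gball_def graph_automorphism_def by fastforce
  moreover have "inj_on f (gball V E x s)"
    using f(1) unfolding graph_automorphism_def bij_betw_def gball_def
    by (auto intro: inj_on_subset)
  ultimately show ?thesis by (intro card_inj_on_le finite_gball)
qed

lemma card_gball_eq:
  assumes "x \<in> V" "y \<in> V"
  shows "card (gball V E x s) = card (gball V E y s)"
  using card_gball_le[OF assms, of s] card_gball_le[OF assms(2,1), of s] by simp

lemma card_disjoint_gballs_le:
  assumes "finite I" and centers: "\<And>i. i \<in> I \<Longrightarrow> c i \<in> V"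
    and separated: "\<And>i j. i \<in> I \<Longrightarrow> j \<in> I \<Longrightarrow> i \<noteq> j \<Longrightarrow> 2 * s < gdist E (c i) (c j)"
    and sub: "\<And>i. i \<in> I \<Longrightarrow> gball V E (c i) s \<subseteq> S" and "S \<subseteq> V" and "x \<in> V"
  shows "card I * card (gball V E x s) \<le> card S"
proof -
  have disjoint: "gball V E (c i) s \<inter> gball V E (c j) s = {}"
    if ij: "i \<in> I" "j \<in> I" "i \<noteq> j" for i j
  proof (rule ccontr)
    assume "gball V E (c i) s \<inter> gball V E (c j) s \<noteq> {}"
    then obtain y where y: "y \<in> V" "gdist E (c i) y \<le> s" "gdist E (c j) y \<le> s"
      unfolding gball_def by auto
    have "gdist E (c i) (c j) \<le> gdist E (c i) y + gdist E (c j) y"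
      using gdist_triangle[OF centers y(1) centers] gdist_sym[OF centers y(1)] ij by metis
    then show False using separated[OF ij] y by linarith
  qed
  have "card I * card (gball V E x s) = (\<Sum>i\<in>I. card (gball V E (c i) s))"
    using card_gball_eq[OF centers \<open>x \<in> V\<close>] by simp
  also have "\<dots> = card (\<Union>i\<in>I. gball V E (c i) s)"
    using disjoint by (intro card_UN_disjoint[symmetric] \<open>finite I\<close>) (auto simp: finite_gball)
  also have "\<dots> \<le> card S"
    using sub \<open>S \<subseteq> V\<close> finite_V by (intro card_mono) (auto intro: finite_subset)
  finally show ?thesis .
qed

end

section \<open>Ball growth along a caret\<close>

text \<open>A 3-caret with its endpoints forgotten; the geodesic property of the branches is implied
  by the separation condition (see gdist_caret_branch).\<close>
definition caret_at :: "('a \<Rightarrow> 'a \<Rightarrow> bool) \<Rightarrow> nat \<Rightarrow> 'a \<Rightarrow> (nat \<Rightarrow> nat \<Rightarrow> 'a) \<Rightarrow> bool" where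
  "caret_at E R v0 g \<longleftrightarrow> (\<forall>i<3. g i 0 = v0 \<and> walk E (g i) R) \<and>
     (\<forall>i<3. \<forall>j<3. i \<noteq> j \<longrightarrow> (\<forall>ki\<le>R. \<forall>kj\<le>R. max ki kj \<le> gdist E (g i ki) (g j kj)))"

lemma caret3_caret_at:
  assumes "caret3 V E R"
  obtains v0 g where "v0 \<in> V" "caret_at E R v0 g"
  using assms unfolding caret3_def caret_at_def geodesic_def by (metis max.commute)

fun caret_radius :: "nat \<Rightarrow> nat" where
  "caret_radius 0 = 0"
| "caret_radius (Suc j) = 3 * caret_radius j + 1"

lemma caret_radius_eq: "2 * caret_radius j + 1 = 3 ^ j"
  by (induction j) auto

context transitive_graph
begin

lemma caret_branch_in_V:
  assumes "v0 \<in> V" "caret_at E R v0 g" "i < 3" "k \<le> R"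
  shows "g i k \<in> V"
  using assms walk_in_V unfolding caret_at_def by metis

lemma gdist_caret_branch:
  assumes "caret_at E R v0 g" "i < 3" "k \<le> R"
  shows "gdist E v0 (g i k) = k"
proof -
  define j :: nat where "j = (if i = 0 then 1 else 0)"
  have j: "j < 3" "j \<noteq> i" unfolding j_def by auto
  have "gdist E (g j 0) (g i k) \<ge> k" "g j 0 = v0"
    using assms j unfolding caret_at_def by (metis le0 max_0L)+
  moreover have "gdist E (g i 0) (g i k) \<le> k" "g i 0 = v0"
    using assms gdist_walk_segment_le[of E "g i" R 0 k] unfolding caret_at_def by auto
  ultimately show ?thesis by simp
qed

lemma card_gball_caret_step:
  assumes v0: "v0 \<in> V" and caret: "caret_at E R v0 g" and "2 * s + 1 \<le> R"
  shows "4 * card (gball V E v0 s) \<le> card (gball V E v0 (3 * s + 1))"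
proof -
  define k where "k = 2 * s + 1"
  define c where "c i = (if i = 3 then v0 else g i k)" for i :: nat
  have kR: "k \<le> R" using assms k_def by simp
  have cV: "c i \<in> V" if "i \<in> {0..3}" for i
    using that caret_branch_in_V[OF v0 caret _ kR] v0 unfolding c_def by fastforce
  have gdist_root: "gdist E v0 (c i) \<le> k" if "i \<in> {0..3}" for i
    using that gdist_caret_branch[OF caret _ kR] unfolding c_def by auto
  have separated: "2 * s < gdist E (c i) (c j)"
    if ij: "i \<in> {0..3}" "j \<in> {0..3}" "i \<noteq> j" for i j
  proof -
    consider "i = 3" "j < 3" | "i < 3" "j = 3" | "i < 3" "j < 3" using ij by fastforce
    then have "k \<le> gdist E (c i) (c j)"
    proof cases
      case 1 then show ?thesis using gdist_caret_branch[OF caret _ kR] unfolding c_def by simp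
    next
      case 2 then show ?thesis
        using gdist_caret_branch[OF caret _ kR] gdist_sym[OF v0 cV[OF ij(1)]] unfolding c_def by simp
    next
      case 3 then show ?thesis using caret kR ij(3) unfolding caret_at_def c_def by fastforce
    qed
    then show ?thesis unfolding k_def by simp
  qed
  have sub: "gball V E (c i) s \<subseteq> gball V E v0 (3 * s + 1)" if "i \<in> {0..3}" for i
    using gdist_triangle[OF v0 cV[OF that]] gdist_root[OF that]
    unfolding gball_def k_def by fastforce
  have "card {0..3::nat} * card (gball V E v0 s) \<le> card (gball V E v0 (3 * s + 1))"
    by (rule card_disjoint_gballs_le[OF _ cV separated sub _ v0]) (auto simp: gball_def)
  then show ?thesis by simp
qed

lemma card_gball_caret_growth:
  assumes "v0 \<in> V" "caret_at E R v0 g" "3 ^ j \<le> 3 * R"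
  shows "4 ^ j \<le> card (gball V E v0 (caret_radius j))"
  using assms(3)
proof (induction j)
  case 0
  show ?case using center_in_gball[OF assms(1)] finite_gball
    by (simp add: Suc_le_eq card_gt_0_iff) blast
next
  case (Suc j)
  then have "2 * caret_radius j + 1 \<le> R" using caret_radius_eq[of j] by simp
  then have "4 * card (gball V E v0 (caret_radius j)) \<le> card (gball V E v0 (caret_radius (Suc j)))"
    using card_gball_caret_step[OF assms(1,2)] by simp
  then show ?case using Suc by simp
qed

lemma card_ge_caret_diam:
  assumes "v0 \<in> V" "caret_at E R v0 g" "3 ^ m \<le> R"
  shows "(diam V E div 3 ^ m + 1) * 4 ^ m \<le> card V"
proof -
  define D L where "D = diam V E" and "L = (3::nat) ^ m"
  define T where "T = D div L"
  obtain u v where uv: "u \<in> V" "v \<in> V" "gdist E u v = D"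
    using diam_attained unfolding D_def by blast
  obtain p where p: "p 0 = u" "p D = v" "walk E p D"
    using shortest_walk[OF uv(1,2)] uv(3) by metis
  have TL: "t * L \<le> D" if "t \<in> {0..T}" for t
    using that le_trans[OF mult_le_mono1 div_times_less_eq_dividend] unfolding T_def by auto
  have cV: "p (t * L) \<in> V" if "t \<in> {0..T}" for t
    using walk_in_V[OF p(3)] p(1) uv(1) TL[OF that] by auto
  have separated: "2 * caret_radius m < gdist E (p (t * L)) (p (t' * L))"
    if tt: "t \<in> {0..T}" "t' \<in> {0..T}" "t \<noteq> t'" for t t'
  proof -
    have "gdist E (p (t * L)) (p (t' * L)) = max (t * L) (t' * L) - min (t * L) (t' * L)"
      using gdist_geodesic_points[OF p(3)] p uv TL tt by simp
    also have "\<dots> \<ge> L"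
      using tt(3) by (cases "t < t'") (auto simp: max_def min_def diff_mult_distrib[symmetric])
    finally show ?thesis using caret_radius_eq[of m] unfolding L_def by simp
  qed
  have "card {0..T} * card (gball V E v0 (caret_radius m)) \<le> card V"
    by (rule card_disjoint_gballs_le[OF _ cV separated _ _ assms(1)]) (auto simp: gball_def)
  moreover have "4 ^ m \<le> card (gball V E v0 (caret_radius m))"
    using card_gball_caret_growth[OF assms(1,2)] assms(3) by simp
  ultimately show ?thesis unfolding T_def L_def D_def
    by (metis card_atLeastAtMost diff_zero Suc_eq_plus1 le_trans mult_le_mono2)
qed

end

lemma card_bound_of_scale_bounds:
  fixes N D R :: nat
  assumes "D > 0" "R \<ge> 1" and scales: "\<And>m. 3 ^ m \<le> R \<Longrightarrow> (D div 3 ^ m + 1) * 4 ^ m \<le> N"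
  shows "1/2 * real D * real R powr (log 3 4 - 1) < real N"
proof -
  define a :: real where "a = log 3 4 - 1"
  have "1 < log 3 (4::real)" by (subst less_log_iff) auto
  then have a: "a > 0" unfolding a_def by simp
  obtain m where m: "3 ^ m \<le> R" "R < 3 ^ (m + 1)"
    using ex_power_ivl1[of 3 R] \<open>R \<ge> 1\<close> by auto
  define L where "L = (3::nat) ^ m"
  define T where "T = D div L"
  have "D mod L < L" "(T + 1) * L = T * L + L" unfolding L_def by simp_all
  then have "D < (T + 1) * L" using div_mult_mod_eq[of D L] unfolding T_def by linarith
  then have "real D < real (T + 1) * real L" by (metis of_nat_less_iff of_nat_mult)
  then have DL: "real D / real L < real (T + 1)" unfolding L_def by (simp add: divide_less_eq)
  have "real R < 3 ^ (m + 1)" using m(2) by (metis of_nat_less_iff of_nat_numeral of_nat_power)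
  then have "real R powr a < (3 ^ (m + 1)) powr a" using a by (intro powr_less_mono2) simp_all
  also have "\<dots> = 3 powr (real (m + 1) * a)"
    by (simp only: powr_realpow[symmetric, of 3] powr_powr)
  also have "\<dots> = (3 powr a) ^ (m + 1)" by (rule powr_power[symmetric]) simp
  also have "(3::real) powr a = 4 / 3" unfolding a_def by (simp add: powr_diff)
  finally have Ra: "real R powr a < (4 / 3) ^ (m + 1)" .
  have "1/2 * real D * real R powr a < 1/2 * real D * (4 / 3) ^ (m + 1)"
    using Ra \<open>D > 0\<close> by simp
  also have "\<dots> \<le> real D * (4 / 3) ^ m" by simp
  also have "\<dots> = real D / real L * 4 ^ m" unfolding L_def by (simp add: power_divide)
  also have "\<dots> < real (T + 1) * 4 ^ m" using DL by (intro mult_strict_right_mono) auto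
  also have "\<dots> \<le> real N"
    using scales[OF m(1)] unfolding T_def L_def
    by (metis of_nat_le_iff of_nat_mult of_nat_numeral of_nat_power)
  finally show ?thesis unfolding a_def .
qed

theorem lemma4p2p1:
  fixes V :: "'a set" and E :: "'a \<Rightarrow> 'a \<Rightarrow> bool" and \<epsilon> c :: real
  assumes "fin_graph V E" and "graph_connected V E" and "vertex_transitive V E"
    and "\<epsilon> > 0" and "c > 0"
    and "real R = \<epsilon> * real (diam V E) powr c"
    and "caret3 V E R"
  shows "real (card V) >
    (1/2) * \<epsilon> powr (log 3 4 - 1) * real (diam V E) powr (1 + c * (log 3 4 - 1))"
proof -
  interpret transitive_graph V E using assms(1-3) by unfold_locales
  obtain v0 g where caret: "v0 \<in> V" "caret_at E R v0 g"
    using caret3_caret_at[OF assms(7)] .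
  have "card V > 0" using finite_V caret(1) by (auto simp: card_gt_0_iff)
  show ?thesis
  proof (cases "diam V E = 0")
    case True
    then show ?thesis using \<open>card V > 0\<close> by simp
  next
    case False
    then have "real R > 0" using assms(4,6) by simp
    then have "R \<ge> 1" by simp
    have "\<epsilon> powr (log 3 4 - 1) * real (diam V E) powr (1 + c * (log 3 4 - 1))
        = real (diam V E) * real R powr (log 3 4 - 1)"
      using assms(4,6) by (simp add: powr_add powr_powr powr_mult)
    then show ?thesis
      using card_bound_of_scale_bounds[OF _ \<open>R \<ge> 1\<close> card_ge_caret_diam[OF caret]] False
      by simp
  qed
qed

end
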